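(* Let $\mathbb{F}$ be an algebraically closed field with $\mathrm{char}\,\mathbb{F}=2$ and $n\ge8$. Let $\underline{a}=(e_1,e_2,\mathbf{u}_1,\mathbf{v}_1,\mathbf{u}_2,\mathbf{v}_2,\mathbf{u}_3,\mathbf{v}_3,0,\ldots,0)\in\mathbf{O}^n$ and let $\underline{b}\in\mathbf{O}^n$ be such that $f(\underline{a})=f(\underline{b})$ for all $f\in S_n^{(3)}$. Then ${\rm G}_2\underline{a}={\rm G}_2\underline{b}$.
   Context: The split octonion algebra $\mathbf{O}$ is the 8-dimensional $\mathbb{F}$-vector space of formal matrices $a=\begin{pmatrix}\alpha&\mathbf{u}\\ \mathbf{v}&\beta\end{pmatrix}$ with $\alpha,\beta\in\mathbb{F}$, $\mathbf{u},\mathbf{v}\in\mathbb{F}^3$, with multiplication $\begin{pmatrix}\alpha&\mathbf{u}\\ \mathbf{v}&\beta\end{pmatrix}\begin{pmatrix}\alpha'&\mathbf{u}'\\ \mathbf{v}'&\beta'\end{pmatrix}=\begin{pmatrix}\alpha\alpha'+\mathbf{u}\cdot\mathbf{v}'&\alpha\mathbf{u}'+\beta'\mathbf{u}-\mathbf{v}\times\mathbf{v}'\\ \alpha'\mathbf{v}+\beta\mathbf{v}'+\mathbf{u}\times\mathbf{u}'&\beta\beta'+\mathbf{v}\cdot\mathbf{u}'\end{pmatrix}$ (dot product and cross product on $\mathbb{F}^3$). Trace $\mathrm{tr}(a)=\alpha+\beta$, norm $n(a)=\alpha\beta-\mathbf{u}\cdot\mathbf{v}$. With $\mathbf{c}_1,\mathbf{c}_2,\mathbf{c}_3$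 the standard basis of $\mathbb{F}^3$: $e_1$ has $\alpha=1$ and all else $0$, $e_2$ has $\beta=1$ and all else $0$, $\mathbf{u}_i$ has $\mathbf{u}=\mathbf{c}_i$ and all else $0$, $\mathbf{v}_i$ has $\mathbf{v}=\mathbf{c}_i$ and all else $0$. ${\rm G}_2=\mathrm{Aut}(\mathbf{O})$ acts diagonally on $\mathbf{O}^n$. $S_n^{(3)}$ is the set of functions on $\mathbf{O}^n$: $\underline{a}\mapsto n(a_i)$, $\underline{a}\mapsto\mathrm{tr}(a_i)$ ($1\le i\le n$), $\underline{a}\mapsto\mathrm{tr}(a_ia_j)$ ($1\le i<j\le n$), and $\underline{a}\mapsto\mathrm{tr}((a_ia_j)a_k)$ ($1\le i<j<k\le n$). *)

theory Defs
  imports "HOL-Computational_Algebra.Polynomial"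
begin

type_synonym 'a vec3 = "'a \<times> 'a \<times> 'a"

definition dot3 :: "'a::comm_ring_1 vec3 \<Rightarrow> 'a vec3 \<Rightarrow> 'a" where
  "dot3 x y = (case x of (x1,x2,x3) \<Rightarrow> case y of (y1,y2,y3) \<Rightarrow> x1*y1 + x2*y2 + x3*y3)"

definition cross3 :: "'a::comm_ring_1 vec3 \<Rightarrow> 'a vec3 \<Rightarrow> 'a vec3" where
  "cross3 x y = (case x of (x1,x2,x3) \<Rightarrow> case y of (y1,y2,y3) \<Rightarrow>
      (x2*y3 - x3*y2, x3*y1 - x1*y3, x1*y2 - x2*y1))"

definition vadd3 :: "'a::comm_ring_1 vec3 \<Rightarrow> 'a vec3 \<Rightarrow> 'a vec3" where
  "vadd3 x y = (case x of (x1,x2,x3) \<Rightarrow> case y of (y1,y2,y3) \<Rightarrow> (x1+y1, x2+y2, x3+y3))"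

definition vsmult3 :: "'a::comm_ring_1 \<Rightarrow> 'a vec3 \<Rightarrow> 'a vec3" where
  "vsmult3 c x = (case x of (x1,x2,x3) \<Rightarrow> (c*x1, c*x2, c*x3))"

text \<open>Split octonion (alpha, u; v, beta), written as the formal matrix
  [[alpha, u], [v, beta]].\<close>

datatype 'a oct = Oct (oa: 'a) (ou: "'a vec3") (ov: "'a vec3") (ob: 'a)

definition omult :: "'a::comm_ring_1 oct \<Rightarrow> 'a oct \<Rightarrow> 'a oct" where
  "omult x y = Oct
     (oa x * oa y + dot3 (ou x) (ov y))
     (vadd3 (vadd3 (vsmult3 (oa x) (ou y)) (vsmult3 (ob y) (ou x))) (vsmult3 (-1) (cross3 (ov x) (ov y))))
     (vadd3 (vadd3 (vsmult3 (oa y) (ov x)) (vsmult3 (ob x) (ov y))) (cross3 (ou x) (ou y)))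
     (ob x * ob y + dot3 (ov x) (ou y))"

definition oadd :: "'a::comm_ring_1 oct \<Rightarrow> 'a oct \<Rightarrow> 'a oct" where
  "oadd x y = Oct (oa x + oa y) (vadd3 (ou x) (ou y)) (vadd3 (ov x) (ov y)) (ob x + ob y)"

definition osmult :: "'a::comm_ring_1 \<Rightarrow> 'a oct \<Rightarrow> 'a oct" where
  "osmult c x = Oct (c * oa x) (vsmult3 c (ou x)) (vsmult3 c (ov x)) (c * ob x)"

definition ozero :: "'a::comm_ring_1 oct" where
  "ozero = Oct 0 (0,0,0) (0,0,0) 0"

definition otr :: "'a::comm_ring_1 oct \<Rightarrow> 'a" where
  "otr x = oa x + ob x"

definition onorm :: "'a::comm_ring_1 oct \<Rightarrow> 'a" where
  "onorm x = oa x * ob x - dot3 (ou x) (ov x)"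

definition oe1 :: "'a::comm_ring_1 oct" where "oe1 = Oct 1 (0,0,0) (0,0,0) 0"
definition oe2 :: "'a::comm_ring_1 oct" where "oe2 = Oct 0 (0,0,0) (0,0,0) 1"
definition ou1 :: "'a::comm_ring_1 oct" where "ou1 = Oct 0 (1,0,0) (0,0,0) 0"
definition ou2 :: "'a::comm_ring_1 oct" where "ou2 = Oct 0 (0,1,0) (0,0,0) 0"
definition ou3 :: "'a::comm_ring_1 oct" where "ou3 = Oct 0 (0,0,1) (0,0,0) 0"
definition ov1 :: "'a::comm_ring_1 oct" where "ov1 = Oct 0 (0,0,0) (1,0,0) 0"
definition ov2 :: "'a::comm_ring_1 oct" where "ov2 = Oct 0 (0,0,0) (0,1,0) 0"
definition ov3 :: "'a::comm_ring_1 oct" where "ov3 = Oct 0 (0,0,0) (0,0,1) 0"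

definition G2 :: "('a::comm_ring_1 oct \<Rightarrow> 'a oct) set" where
  "G2 = {g. bij g \<and>
            (\<forall>x y. g (oadd x y) = oadd (g x) (g y)) \<and>
            (\<forall>c x. g (osmult c x) = osmult c (g x)) \<and>
            (\<forall>x y. g (omult x y) = omult (g x) (g y))}"

text \<open>Diagonal action on O^n (n-tuples as lists of length n) and orbits.\<close>

definition G2_orbit :: "'a::comm_ring_1 oct list \<Rightarrow> 'a oct list set" where
  "G2_orbit xs = {map g xs | g. g \<in> G2}"

text \<open>Agreement of all functions in S_n^(3) on two n-tuples.\<close>

definition same_S3 :: "nat \<Rightarrow> 'a::comm_ring_1 oct list \<Rightarrow> 'a oct list \<Rightarrow> bool" where
  "same_S3 n xs ys \<longleftrightarrow>
     (\<forall>i<n. onorm (xs!i) = onorm (ys!i)) \<and>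
     (\<forall>i<n. otr (xs!i) = otr (ys!i)) \<and>
     (\<forall>i j. i < j \<and> j < n \<longrightarrow> otr (omult (xs!i) (xs!j)) = otr (omult (ys!i) (ys!j))) \<and>
     (\<forall>i j k. i < j \<and> j < k \<and> k < n \<longrightarrow>
        otr (omult (omult (xs!i) (xs!j)) (xs!k)) = otr (omult (omult (ys!i) (ys!j)) (ys!k)))"

end

theory Submission
  imports Defs "Jordan_Normal_Form.Determinant"
begin

text \<open>Put x_k = b_k for k < 8. Every trace tr(x_i x_j) and tr((x_i x_j) x_k), with
  arbitrary indices, is a polynomial in the functions of S_n^(3): this follows from the
  quadratic identity x^2 - tr(x) x + n(x) 1 = 0, its linearisation, and the cyclic symmetry of
  the trace. Hence the x_k have the same Gram matrix as the standard basis under the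
  nondegenerate trace form, so the linear map g sending the k-th basis vector to x_k is
  bijective and every element w is determined by the traces tr(w x_k). Comparing
  tr((g(p) g(q)) x_k) with the corresponding trace for p q shows that g is multiplicative, so
  g lies in G_2; comparing tr(b_m x_k) = tr(a_m a_k) shows b_m = g(a_m) for every m.\<close>

lemma oct_components_cases:
  obtains a u1 u2 u3 v1 v2 v3 b where "x = Oct a (u1,u2,u3) (v1,v2,v3) b"
  by (metis prod_cases3 oct.exhaust)

lemmas oct_defs = omult_def oadd_def osmult_def ozero_def otr_def onorm_def dot3_def cross3_def
  vadd3_def vsmult3_def oe1_def oe2_def ou1_def ou2_def ou3_def ov1_def ov2_def ov3_def

instantiation oct :: (comm_ring_1) ab_group_add
begin
definition plus_oct_def: "x + y = oadd x y"
definition zero_oct_def: "0 = ozero"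
definition uminus_oct_def: "- x = osmult (-1) x"
definition minus_oct_def: "x - y = oadd x (osmult (-1) y)"
instance
proof
  fix a b c :: "'a oct"
  show "a + b + c = a + (b + c)"
    by (cases a rule: oct_components_cases; cases b rule: oct_components_cases;
        cases c rule: oct_components_cases) (simp add: plus_oct_def oct_defs algebra_simps)
  show "a + b = b + a"
    by (cases a rule: oct_components_cases; cases b rule: oct_components_cases)
      (simp add: plus_oct_def oct_defs algebra_simps)
  show "0 + a = a"
    by (cases a rule: oct_components_cases) (simp add: plus_oct_def zero_oct_def oct_defs)
  show "- a + a = 0"
    by (cases a rule: oct_components_cases)
      (simp add: plus_oct_def uminus_oct_def zero_oct_def oct_defs)
  show "a - b = a + - b"
    by (simp add: plus_oct_def uminus_oct_def minus_oct_def)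
qed
end

lemmas oct_ops_defs = oct_defs plus_oct_def zero_oct_def uminus_oct_def minus_oct_def

lemma omult_add_left: "omult (x + y) z = omult x z + omult y z"
  by (cases x rule: oct_components_cases; cases y rule: oct_components_cases;
      cases z rule: oct_components_cases) (simp add: oct_ops_defs algebra_simps)

lemma omult_add_right: "omult z (x + y) = omult z x + omult z y"
  by (cases x rule: oct_components_cases; cases y rule: oct_components_cases;
      cases z rule: oct_components_cases) (simp add: oct_ops_defs algebra_simps)

lemma omult_diff_left: "omult (x - y) z = omult x z - omult y z"
  by (cases x rule: oct_components_cases; cases y rule: oct_components_cases;
      cases z rule: oct_components_cases) (simp add: oct_ops_defs algebra_simps)

lemma omult_osmult_left: "omult (osmult c x) z = osmult c (omult x z)"
  by (cases x rule: oct_components_cases; cases z rule: oct_components_cases)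
    (simp add: oct_ops_defs algebra_simps)

lemma omult_osmult_right: "omult z (osmult c x) = osmult c (omult z x)"
  by (cases x rule: oct_components_cases; cases z rule: oct_components_cases)
    (simp add: oct_ops_defs algebra_simps)

lemma osmult_add: "osmult c (x + y) = osmult c x + osmult c y"
  by (cases x rule: oct_components_cases; cases y rule: oct_components_cases)
    (simp add: oct_ops_defs algebra_simps)

lemma osmult_add_scalar: "osmult (c + d) x = osmult c x + osmult d x"
  by (cases x rule: oct_components_cases) (simp add: oct_ops_defs algebra_simps)

lemma osmult_osmult: "osmult c (osmult d x) = osmult (c * d) x"
  by (cases x rule: oct_components_cases) (simp add: oct_ops_defs algebra_simps)

lemma osmult_zero_left: "osmult 0 x = 0"
  by (cases x rule: oct_components_cases) (simp add: oct_ops_defs)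

lemma omult_zero_left [simp]: "omult 0 z = 0"
  by (cases z rule: oct_components_cases) (simp add: oct_ops_defs)

lemma omult_zero_right [simp]: "omult z 0 = 0"
  by (cases z rule: oct_components_cases) (simp add: oct_ops_defs)

lemma osmult_zero_right [simp]: "osmult c 0 = 0"
  by (simp add: oct_ops_defs)

lemma otr_zero [simp]: "otr 0 = 0"
  by (simp add: oct_ops_defs)

lemma otr_add: "otr (x + y) = otr x + otr y"
  by (simp add: oct_ops_defs)

lemma otr_diff: "otr (x - y) = otr x - otr y"
  by (simp add: oct_ops_defs)

lemma otr_osmult: "otr (osmult c x) = c * otr x"
  by (simp add: oct_ops_defs algebra_simps)

lemma otr_sum: "otr (sum f A) = (\<Sum>i\<in>A. otr (f i))"
  using sum_comp_morphism[of otr f A] by (simp add: otr_add o_def)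

lemma omult_sum_left: "omult (sum f A) z = (\<Sum>i\<in>A. omult (f i) z)"
  using sum_comp_morphism[of "\<lambda>x. omult x z" f A] by (simp add: omult_add_left o_def)

lemma omult_sum_right: "omult z (sum f A) = (\<Sum>i\<in>A. omult z (f i))"
  using sum_comp_morphism[of "\<lambda>x. omult z x" f A] by (simp add: omult_add_right o_def)

lemma osmult_sum: "osmult c (sum f A) = (\<Sum>i\<in>A. osmult c (f i))"
  using sum_comp_morphism[of "\<lambda>x. osmult c x" f A] by (simp add: osmult_add o_def)

lemma otr_omult_commute: "otr (omult x y) = otr (omult y x)"
  by (cases x rule: oct_components_cases; cases y rule: oct_components_cases)
    (simp add: oct_ops_defs algebra_simps)

lemma otr_omult_omult_cyclic: "otr (omult (omult x y) z) = otr (omult (omult y z) x)"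
  by (cases x rule: oct_components_cases; cases y rule: oct_components_cases;
      cases z rule: oct_components_cases) (simp add: oct_ops_defs algebra_simps)

text \<open>Traced forms of the quadratic identity x^2 - tr(x) x + n(x) 1 = 0 and of its
  linearisation in x.\<close>

lemma otr_omult_self: "otr (omult x x) = otr x ^ 2 - 2 * onorm x"
  by (cases x rule: oct_components_cases) (simp add: oct_ops_defs algebra_simps power2_eq_square)

lemma otr_omult_omult_self: "otr (omult (omult x x) z) = otr x * otr (omult x z) - onorm x * otr z"
  by (cases x rule: oct_components_cases; cases z rule: oct_components_cases)
    (simp add: oct_ops_defs algebra_simps)

lemma otr_omult_omult_swap:
  "otr (omult (omult x y) z) + otr (omult (omult y x) z) =
     otr x * otr (omult y z) + otr y * otr (omult x z) - (otr x * otr y - otr (omult x y)) * otr z"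
  by (cases x rule: oct_components_cases; cases y rule: oct_components_cases;
      cases z rule: oct_components_cases) (simp add: oct_ops_defs algebra_simps)

lemma same_S3_otr_omult:
  assumes "same_S3 m xs ys" "i < m" "j < m"
  shows "otr (omult (xs!i) (xs!j)) = otr (omult (ys!i) (ys!j))"
proof (cases i j rule: linorder_cases)
  case less
  then show ?thesis using assms by (simp add: same_S3_def)
next
  case equal
  then show ?thesis using assms by (simp add: same_S3_def otr_omult_self)
next
  case greater
  then show ?thesis
    using assms otr_omult_commute[of "xs!i"] otr_omult_commute[of "ys!i"] by (simp add: same_S3_def)
qed

lemma same_S3_otr_omult_omult:
  assumes S: "same_S3 m xs ys" and "i < m" "j < m" "k < m"
  shows "otr (omult (omult (xs!i) (xs!j)) (xs!k)) = otr (omult (omult (ys!i) (ys!j)) (ys!k))"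
proof -
  define P where "P i j k \<longleftrightarrow>
    otr (omult (omult (xs!i) (xs!j)) (xs!k)) = otr (omult (omult (ys!i) (ys!j)) (ys!k))" for i j k
  have pairs: "otr (omult (xs!i) (xs!j)) = otr (omult (ys!i) (ys!j))" if "i < m" "j < m" for i j
    using S that by (rule same_S3_otr_omult)
  have tr: "otr (xs!i) = otr (ys!i)" and norm: "onorm (xs!i) = onorm (ys!i)" if "i < m" for i
    using S that by (simp_all add: same_S3_def)
  have cyclic: "P i j k \<longleftrightarrow> P j k i" for i j k
    unfolding P_def by (simp add: otr_omult_omult_cyclic[of "xs!i"] otr_omult_omult_cyclic[of "ys!i"])
  have swap: "P i j k \<longleftrightarrow> P j i k" if "i < m" "j < m" "k < m" for i j k
  proof -
    have "otr (omult (omult (xs!i) (xs!j)) (xs!k)) + otr (omult (omult (xs!j) (xs!i)) (xs!k)) =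
        otr (omult (omult (ys!i) (ys!j)) (ys!k)) + otr (omult (omult (ys!j) (ys!i)) (ys!k))"
      unfolding otr_omult_omult_swap using that by (simp add: pairs tr)
    then show ?thesis unfolding P_def by (metis add_left_cancel add_right_cancel)
  qed
  have square: "P i i k" if "i < m" "k < m" for i k
    unfolding P_def using that by (simp add: otr_omult_omult_self pairs tr norm)
  have ordered: "P i j k" if "i < j" "j < m" "k < m" for i j k
  proof -
    have "i < m" using that by linarith
    consider "j < k" | "k = j" | "i < k" "k < j" | "k = i" | "k < i"
      using \<open>i < j\<close> by linarith
    then show ?thesis
    proof cases
      case 1
      then show ?thesis using S that unfolding P_def same_S3_def by blast
    next
      case 2
      then show ?thesis using cyclic[of i j j] square[of j i] \<open>i < m\<close> that by simp
    next
      case 3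
      then have "P i k j" using S that unfolding P_def same_S3_def by blast
      then show ?thesis using cyclic[of j i k] swap[of i j k] \<open>i < m\<close> that by simp
    next
      case 4
      then show ?thesis using cyclic[of i j i] cyclic[of j i i] square[of i j] \<open>i < m\<close> that by simp
    next
      case 5
      then have "P k i j" using S that unfolding P_def same_S3_def by blast
      then show ?thesis using cyclic by blast
    qed
  qed
  have "P i j k"
  proof (cases i j rule: linorder_cases)
    case greater
    then show ?thesis using ordered[of j i k] swap[of i j k] assms by simp
  qed (use ordered square assms in auto)
  then show ?thesis unfolding P_def .
qed

definition obasis :: "nat \<Rightarrow> 'a::comm_ring_1 oct" where
  "obasis k = [oe1, oe2, ou1, ov1, ou2, ov2, ou3, ov3] ! k"

definition ocoord :: "nat \<Rightarrow> 'a::comm_ring_1 oct \<Rightarrow> 'a" where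
  "ocoord k x = (if k < 8 then [oa x, ob x, fst (ou x), fst (ov x), fst (snd (ou x)), fst (snd (ov x)),
      snd (snd (ou x)), snd (snd (ov x))] ! k else 0)"

definition odual :: "nat \<Rightarrow> nat" where
  "odual k = (if k < 2 then k else if even k then k + 1 else k - 1)"

definition lin_ext :: "(nat \<Rightarrow> 'a::comm_ring_1 oct) \<Rightarrow> 'a oct \<Rightarrow> 'a oct" where
  "lin_ext x p = (\<Sum>k<8. osmult (ocoord k p) (x k))"

lemma less_8_cases: "(k::nat) < 8 \<longleftrightarrow> k = 0 \<or> k = 1 \<or> k = 2 \<or> k = 3 \<or> k = 4 \<or> k = 5 \<or> k = 6 \<or> k = 7"
  by auto

lemma sum_lessThan_8:
  "(\<Sum>k<(8::nat). f k) = f 0 + f 1 + f 2 + f 3 + f 4 + f 5 + f 6 + (f 7 :: 'b::comm_monoid_add)"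
  by (simp add: numeral_eq_Suc lessThan_Suc add.commute add.left_commute)

lemma odual_less: "k < 8 \<Longrightarrow> odual k < 8"
  by (auto simp: odual_def less_8_cases)

lemma odual_odual: "k < 8 \<Longrightarrow> odual (odual k) = k"
  by (auto simp: odual_def less_8_cases)

lemma otr_omult_obasis: "i < 8 \<Longrightarrow> j < 8 \<Longrightarrow>
    otr (omult (obasis i) (obasis j)) = (if j = odual i then 1 else 0)"
  unfolding less_8_cases by (elim disjE) (simp_all add: obasis_def odual_def oct_ops_defs)

lemma ocoord_eq_otr: "k < 8 \<Longrightarrow> ocoord k w = otr (omult w (obasis (odual k)))"
  by (cases w rule: oct_components_cases)
    (auto simp: less_8_cases ocoord_def obasis_def odual_def oct_ops_defs)

lemma ocoord_obasis: "k < 8 \<Longrightarrow> j < 8 \<Longrightarrow> ocoord k (obasis j) = (if k = j then 1 else 0)"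
  by (auto simp: less_8_cases ocoord_def obasis_def oct_ops_defs)

lemma ocoord_add: "ocoord k (p + q) = ocoord k p + ocoord k q"
  by (cases p rule: oct_components_cases; cases q rule: oct_components_cases)
    (simp add: ocoord_def oct_ops_defs nth_Cons')

lemma ocoord_osmult: "ocoord k (osmult c p) = c * ocoord k p"
  by (cases p rule: oct_components_cases) (simp add: ocoord_def oct_ops_defs nth_Cons')

lemma ocoord_zero [simp]: "ocoord k 0 = 0"
  by (simp add: ocoord_def oct_ops_defs nth_Cons')

lemma ocoord_sum: "ocoord k (sum f A) = (\<Sum>i\<in>A. ocoord k (f i))"
  using sum_comp_morphism[of "ocoord k" f A] by (simp add: ocoord_add o_def)

lemma lin_ext_obasis: "lin_ext obasis p = p"
  by (cases p rule: oct_components_cases)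
    (simp add: lin_ext_def sum_lessThan_8 ocoord_def obasis_def oct_ops_defs)

lemma oct_eq_if_otr_omult_obasis_eq:
  assumes "\<And>k. k < 8 \<Longrightarrow> otr (omult p (obasis k)) = otr (omult q (obasis k))"
  shows "p = q"
proof -
  have "ocoord k p = ocoord k q" for k
  proof (cases "k < 8")
    case True
    then show ?thesis using assms[OF odual_less] by (simp add: ocoord_eq_otr)
  qed (simp add: ocoord_def)
  then show ?thesis
    using lin_ext_obasis[of p] lin_ext_obasis[of q] by (simp add: lin_ext_def)
qed

lemma lin_ext_add: "lin_ext x (p + q) = lin_ext x p + lin_ext x q"
  by (simp add: lin_ext_def ocoord_add osmult_add_scalar sum.distrib)

lemma lin_ext_osmult: "lin_ext x (osmult c p) = osmult c (lin_ext x p)"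
  by (simp add: lin_ext_def ocoord_osmult osmult_osmult osmult_sum)

lemma otr_omult_lin_ext: "otr (omult (lin_ext x p) z) = (\<Sum>i<8. ocoord i p * otr (omult (x i) z))"
  by (simp add: lin_ext_def omult_sum_left otr_sum omult_osmult_left otr_osmult)

lemma otr_omult_omult_lin_ext:
  "otr (omult (omult (lin_ext x p) (lin_ext x q)) z) =
     (\<Sum>i<8. \<Sum>j<8. ocoord i p * ocoord j q * otr (omult (omult (x i) (x j)) z))"
proof -
  have "otr (omult (omult (lin_ext x p) (lin_ext x q)) z) =
      (\<Sum>i<8. ocoord i p * otr (omult (omult (x i) (lin_ext x q)) z))"
    by (simp add: lin_ext_def[of x p] omult_sum_left otr_sum omult_osmult_left otr_osmult)
  also have "\<dots> = (\<Sum>i<8. ocoord i p * (\<Sum>j<8. ocoord j q * otr (omult (omult (x i) (x j)) z)))"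
    by (simp add: lin_ext_def[of x q] omult_sum_left omult_sum_right otr_sum omult_osmult_left
        omult_osmult_right otr_osmult)
  finally show ?thesis by (simp add: sum_distrib_left mult.assoc)
qed

locale basis_gram_frame =
  fixes x :: "nat \<Rightarrow> 'a::field oct"
  assumes otr_omult_frame:
    "\<And>i j. i < 8 \<Longrightarrow> j < 8 \<Longrightarrow> otr (omult (x i) (x j)) = otr (omult (obasis i) (obasis j))"
begin

lemma otr_omult_lin_ext_frame:
  "k < 8 \<Longrightarrow> otr (omult (lin_ext x p) (x k)) = otr (omult p (obasis k))"
  using otr_omult_lin_ext[of x p "x k"] otr_omult_lin_ext[of obasis p "obasis k"]
  by (simp add: otr_omult_frame lin_ext_obasis)

definition pairing_mat :: "'a mat" where
  "pairing_mat = mat 8 8 (\<lambda>(k,l). otr (omult (obasis l) (x k)))"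

definition dual_frame_mat :: "'a mat" where
  "dual_frame_mat = mat 8 8 (\<lambda>(l,m). ocoord l (x (odual m)))"

lemma pairing_mat_mult_dual_frame_mat: "pairing_mat * dual_frame_mat = 1\<^sub>m 8"
proof (rule eq_matI)
  fix k m assume k: "k < dim_row (1\<^sub>m 8)" and m: "m < dim_col (1\<^sub>m 8)"
  have "(pairing_mat * dual_frame_mat) $$ (k,m) =
      (\<Sum>l<8. ocoord l (x (odual m)) * otr (omult (obasis l) (x k)))"
    using k m by (simp add: pairing_mat_def dual_frame_mat_def scalar_prod_def atLeast0LessThan
        mult.commute)
  also have "\<dots> = otr (omult (x (odual m)) (x k))"
    by (rule otr_omult_lin_ext[of obasis "x (odual m)" "x k", unfolded lin_ext_obasis, symmetric])
  also have "\<dots> = 1\<^sub>m 8 $$ (k,m)"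
    using k m by (auto simp: otr_omult_frame otr_omult_obasis odual_less odual_odual)
  finally show "(pairing_mat * dual_frame_mat) $$ (k,m) = 1\<^sub>m 8 $$ (k,m)" .
qed (simp_all add: pairing_mat_def dual_frame_mat_def)

lemma pairing_mat_mult_ocoord_vec:
  "pairing_mat *\<^sub>v vec 8 (\<lambda>l. ocoord l w) = vec 8 (\<lambda>k. otr (omult w (x k)))"
  using otr_omult_lin_ext[of obasis w "x _", unfolded lin_ext_obasis]
  by (intro eq_vecI) (simp_all add: pairing_mat_def scalar_prod_def atLeast0LessThan mult.commute)

lemma otr_omult_frame_eq_zero:
  assumes w: "\<And>k. k < 8 \<Longrightarrow> otr (omult w (x k)) = 0"
  shows "w = 0"
proof -
  define c where "c = vec 8 (\<lambda>l. ocoord l w)"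
  have carrier: "pairing_mat \<in> carrier_mat 8 8" "dual_frame_mat \<in> carrier_mat 8 8"
    "c \<in> carrier_vec 8"
    by (simp_all add: pairing_mat_def dual_frame_mat_def c_def)
  have "dual_frame_mat * pairing_mat = 1\<^sub>m 8"
    using carrier pairing_mat_mult_dual_frame_mat by (metis mat_mult_left_right_inverse)
  moreover have "pairing_mat *\<^sub>v c = 0\<^sub>v 8"
    using w by (auto simp: c_def pairing_mat_mult_ocoord_vec)
  ultimately have "c = dual_frame_mat *\<^sub>v 0\<^sub>v 8"
    using carrier by (metis assoc_mult_mat_vec one_mult_mat_vec)
  then have "c = 0\<^sub>v 8"
    using carrier by auto
  then have "ocoord l w = 0" for l
    by (cases "l < 8") (auto simp: c_def ocoord_def dest: arg_cong[of _ _ "\<lambda>v. v $ l"])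
  then show ?thesis
    using lin_ext_obasis[of w] by (simp add: lin_ext_def osmult_zero_left)
qed

lemma eq_lin_ext_if_otr_omult_frame:
  assumes "\<And>k. k < 8 \<Longrightarrow> otr (omult w (x k)) = otr (omult p (obasis k))"
  shows "w = lin_ext x p"
proof -
  have "w - lin_ext x p = 0"
    by (rule otr_omult_frame_eq_zero)
      (simp add: omult_diff_left otr_diff assms otr_omult_lin_ext_frame)
  then show ?thesis by simp
qed

lemma inj_lin_ext: "inj (lin_ext x)"
  by (rule injI, rule oct_eq_if_otr_omult_obasis_eq) (metis otr_omult_lin_ext_frame)

lemma surj_lin_ext: "surj (lin_ext x)"
proof -
  have "w \<in> range (lin_ext x)" for w
  proof -
    define p where "p = (\<Sum>k<8. osmult (otr (omult w (x (odual k)))) (obasis k))"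
    have coords: "ocoord j p = otr (omult w (x (odual j)))" if "j < 8" for j
      using that by (simp add: p_def ocoord_sum ocoord_osmult ocoord_obasis if_distrib cong: if_cong)
    have "otr (omult w (x k)) = otr (omult p (obasis k))" if "k < 8" for k
      using that coords[of "odual k"] ocoord_eq_otr[of "odual k" p] by (simp add: odual_less odual_odual)
    then show ?thesis
      using eq_lin_ext_if_otr_omult_frame by blast
  qed
  then show ?thesis by blast
qed

lemma lin_ext_omult:
  assumes triples: "\<And>i j k. i < 8 \<Longrightarrow> j < 8 \<Longrightarrow> k < 8 \<Longrightarrow>
      otr (omult (omult (x i) (x j)) (x k)) = otr (omult (omult (obasis i) (obasis j)) (obasis k))"
  shows "lin_ext x (omult p q) = omult (lin_ext x p) (lin_ext x q)"
proof -
  have "otr (omult (omult (lin_ext x p) (lin_ext x q)) (x k)) = otr (omult (omult p q) (obasis k))"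
    if "k < 8" for k
    using otr_omult_omult_lin_ext[of x p q "x k"] otr_omult_omult_lin_ext[of obasis p q "obasis k"]
    by (simp add: triples that lin_ext_obasis)
  then show ?thesis
    by (rule eq_lin_ext_if_otr_omult_frame[symmetric])
qed

lemma lin_ext_in_G2:
  assumes "\<And>i j k. i < 8 \<Longrightarrow> j < 8 \<Longrightarrow> k < 8 \<Longrightarrow>
      otr (omult (omult (x i) (x j)) (x k)) = otr (omult (omult (obasis i) (obasis j)) (obasis k))"
  shows "lin_ext x \<in> G2"
  using inj_lin_ext surj_lin_ext lin_ext_add lin_ext_osmult lin_ext_omult[OF assms]
  unfolding G2_def bij_def plus_oct_def by auto

end

lemma comp_in_G2: "g \<in> G2 \<Longrightarrow> h \<in> G2 \<Longrightarrow> h \<circ> g \<in> G2"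
  unfolding G2_def by (auto intro: bij_comp)

lemma inv_in_G2:
  assumes "g \<in> G2"
  shows "inv_into UNIV g \<in> G2"
proof -
  have g: "bij g" "\<And>x y. g (oadd x y) = oadd (g x) (g y)" "\<And>c x. g (osmult c x) = osmult c (g x)"
    "\<And>x y. g (omult x y) = omult (g x) (g y)"
    using assms unfolding G2_def by auto
  define h where "h = inv_into UNIV g"
  have gh: "g (h x) = x" and hg: "h (g x) = x" for x
    using g(1) by (simp_all add: h_def bij_is_surj bij_is_inj surj_f_inv_f)
  have "h (oadd x y) = oadd (h x) (h y)" "h (osmult c x) = osmult c (h x)"
    "h (omult x y) = omult (h x) (h y)" for x y c
    by (metis g(2) gh hg, metis g(3) gh hg, metis g(4) gh hg)
  then show ?thesis
    unfolding G2_def h_def[symmetric] using bij_imp_bij_inv[OF g(1)] by (simp add: h_def)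
qed

lemma G2_orbit_map:
  assumes g: "g \<in> G2"
  shows "G2_orbit (map g a) = G2_orbit a"
proof
  show "G2_orbit (map g a) \<subseteq> G2_orbit a"
    unfolding G2_orbit_def using comp_in_G2[OF g] by (auto simp: map_map)
next
  have "map h a = map (h \<circ> inv_into UNIV g) (map g a)" for h :: "'a oct \<Rightarrow> 'a oct"
    using g by (simp add: G2_def bij_is_inj)
  then show "G2_orbit a \<subseteq> G2_orbit (map g a)"
    unfolding G2_orbit_def using comp_in_G2[OF inv_in_G2[OF g]] by blast
qed

lemma G2_orbit_eq_if_same_S3:
  fixes a b :: "'a::field oct list"
  assumes S: "same_S3 n a b" and "length a = n" "length b = n" "8 \<le> n"
    and basis: "\<And>i. i < 8 \<Longrightarrow> a ! i = obasis i"
  shows "G2_orbit a = G2_orbit b"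
proof -
  define x where "x k = b ! k" for k
  have pairs: "otr (omult (x i) (x j)) = otr (omult (obasis i) (obasis j))" if "i < 8" "j < 8" for i j
    using same_S3_otr_omult[OF S, of i j] that \<open>8 \<le> n\<close> by (simp add: x_def basis)
  interpret basis_gram_frame x
    using pairs by unfold_locales
  have "lin_ext x \<in> G2"
  proof (rule lin_ext_in_G2)
    fix i j k :: nat assume "i < 8" "j < 8" "k < 8"
    then show "otr (omult (omult (x i) (x j)) (x k)) = otr (omult (omult (obasis i) (obasis j)) (obasis k))"
      using same_S3_otr_omult_omult[OF S, of i j k] \<open>8 \<le> n\<close> by (simp add: x_def basis)
  qed
  moreover have "b = map (lin_ext x) a"
  proof (rule nth_equalityI)
    fix m assume "m < length b"
    then have "otr (omult (b ! m) (x k)) = otr (omult (a ! m) (obasis k))" if "k < 8" for k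
      using same_S3_otr_omult[OF S, of m k] that assms(2-4) by (simp add: x_def basis)
    then show "b ! m = map (lin_ext x) a ! m"
      using \<open>m < length b\<close> assms(2,3) by (simp add: eq_lin_ext_if_otr_omult_frame)
  qed (simp add: assms(2,3))
  ultimately show ?thesis
    by (metis G2_orbit_map)
qed

theorem lemma7p9:
  fixes n :: nat and b :: "'a::alg_closed_field oct list"
  assumes "CHAR('a) = 2"
    and "n \<ge> 8"
    and "length b = n"
    and "same_S3 n ([oe1, oe2, ou1, ov1, ou2, ov2, ou3, ov3] @ replicate (n - 8) ozero) b"
  shows "G2_orbit ([oe1, oe2, ou1, ov1, ou2, ov2, ou3, ov3] @ replicate (n - 8) ozero) = G2_orbit b"
proof (rule G2_orbit_eq_if_same_S3[OF assms(4)])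
  show "length ([oe1, oe2, ou1, ov1, ou2, ov2, ou3, ov3] @ replicate (n - 8) ozero) = n"
    using assms(2) by simp
  show "([oe1, oe2, ou1, ov1, ou2, ov2, ou3, ov3] @ replicate (n - 8) ozero) ! i = obasis i"
    if "i < 8" for i
    unfolding obasis_def using that by (subst nth_append) simp
qed (use assms(2,3) in simp_all)

end
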